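(* Let $a,b,c\in\mathbb{C}$ with $a\neq0$, $c\neq0$, $\Re(b)>0$, $\Re(b+a+c)>0$, $\Re(b+a-c)>0$, $\Re(b-a+c)>0$, $\Re(b-a-c)>0$, and $\frac{a+c}{b},\frac{a-c}{b}\notin\{\pm1,\pm3,\pm5,\dots\}$. Put $\tau_1=\frac12-\frac{a+c}{2b}$, $\tau_2=\frac12-\frac{a-c}{2b}$, $\tau_3=\frac12+\frac{a+c}{2b}$, $\tau_4=\frac12+\frac{a-c}{2b}$, assume $1+\tau_j\notin\mathbb{Z}_0^-$ ($j=1,\dots,4$), and let $Q=(b-a-c)(b+a+c)(b-a+c)(b+a-c)$. Then $$ {}_6F_5\!\left(\begin{matrix}1,\ \frac32,\ \tau_1,\ \tau_2,\ \tau_3,\ \tau_4\\ \frac12,\ 1+\tau_1,\ 1+\tau_2,\ 1+\tau_3,\ 1+\tau_4\end{matrix};\,-1\right) =\frac{\pi Q}{4\,a\,c\,b^{2}}\cdot\frac{\sin\!\big(\frac{a\pi}{2b}\big)\sin\!\big(\frac{c\pi}{2b}\big)}{\cos\!\big(\frac{c\pi}{b}\big)+\cos\!\big(\frac{a\pi}{b}\big)}. $$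
   Context: $\mathbb{Z}_0^-=\{0,-1,-2,\dots\}$. The Pochhammer symbol is $(\lambda)_0=1$, $(\lambda)_n=\lambda(\lambda+1)\cdots(\lambda+n-1)$ for $n\ge1$. The generalized hypergeometric series is ${}_pF_q\!\left(\begin{matrix}\alpha_1,\dots,\alpha_p\\ \beta_1,\dots,\beta_q\end{matrix};z\right)=\sum_{n=0}^\infty\frac{(\alpha_1)_n\cdots(\alpha_p)_n}{(\beta_1)_n\cdots(\beta_q)_n}\frac{z^n}{n!}$ (with no $\beta_j\in\mathbb{Z}_0^-$). *)

theory Defs
  imports "HOL-Analysis.Analysis"
begin

definition hypergeomF :: "complex list \<Rightarrow> complex list \<Rightarrow> complex \<Rightarrow> complex" where
  "hypergeomF as bs z =
     (\<Sum>n. (\<Prod>\<alpha>\<leftarrow>as. pochhammer \<alpha> n) / (\<Prod>\<beta>\<leftarrow>bs. pochhammer \<beta> n) * z ^ n / fact n)"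

end

theory Submission
  imports Defs "HOL-Probability.Characteristic_Functions"
begin

text \<open>
  Write u and v for the first two parameters tau1, tau2, so that tau3 = 1 - u and tau4 = 1 - v.
  Since (t)_n / (1 + t)_n = t / (t + n) and (3/2)_n / (1/2)_n = 2n + 1, the n-th term of the
  series is (-1)^n (2n + 1) times the product of t / (t + n) over t = u, v, 1 - u, 1 - v, and a
  partial fraction decomposition turns it into K (-1)^n (f u n - f v n), where
  f w n = 1/(n + w) + 1/(n + 1 - w) and K = u(1 - u)v(1 - v) / (v(1 - v) - u(1 - u)).
  The alternating series of f w n sums to pi / sin (pi w): taken in pairs it is a difference of
  digamma values at half arguments, which the reflection formula
  Digamma (1 - z) - Digamma z = pi cot (pi z) and the identity cot x + tan x = 2 / sin (2x)
  evaluate. Finally sin (pi u) = cos (alpha + gamma) and sin (pi v) = cos (alpha - gamma) with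
  alpha = a pi / (2b) and gamma = c pi / (2b).
\<close>

lemma sin_pi_times_neq_0:
  fixes z :: complex
  assumes "z \<notin> \<int>"
  shows "sin (of_real pi * z) \<noteq> 0"
  using assms by (subst sin_eq_0) auto

lemma Digamma_reflection_complex:
  fixes z :: complex
  assumes "z \<notin> \<int>"
  shows "Digamma (1 - z) - Digamma z = of_real pi * cot (of_real pi * z)"
proof -
  have "z \<notin> \<int>\<^sub>\<le>\<^sub>0" "1 - z \<notin> \<int>\<^sub>\<le>\<^sub>0"
    using assms nonpos_Ints_subset_Ints Ints_diff[of 1 "1 - z"] by auto
  then have "((\<lambda>t. Gamma t * Gamma (1 - t)) has_field_derivative
      Gamma z * Gamma (1 - z) * (Digamma z - Digamma (1 - z))) (at z)"
    by (auto intro!: derivative_eq_intros simp: algebra_simps)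
  moreover have sin: "sin (of_real pi * z) \<noteq> 0"
    using assms by (rule sin_pi_times_neq_0)
  then have "((\<lambda>t. Gamma t * Gamma (1 - t)) has_field_derivative
      - of_real pi * (of_real pi * cos (of_real pi * z)) / sin (of_real pi * z) ^ 2) (at z)"
    unfolding Gamma_reflection_complex by (auto intro!: derivative_eq_intros simp: power2_eq_square)
  ultimately have "Gamma z * Gamma (1 - z) * (Digamma z - Digamma (1 - z))
      = Gamma z * Gamma (1 - z) * (- of_real pi * cot (of_real pi * z))"
    using sin by (simp add: DERIV_unique Gamma_reflection_complex cot_def power2_eq_square)
  moreover have "Gamma z * Gamma (1 - z) \<noteq> 0"
    using sin by (simp add: Gamma_reflection_complex)
  ultimately have "Digamma z - Digamma (1 - z) = - of_real pi * cot (of_real pi * z)"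
    by (metis mult_left_cancel)
  then show ?thesis
    by (simp add: algebra_simps)
qed

lemma Digamma_half_shift_sums:
  fixes w :: complex
  assumes "w \<notin> \<int>\<^sub>\<le>\<^sub>0"
  shows "(\<lambda>k. 1 / (of_nat (2 * k) + w) - 1 / (of_nat (2 * k + 1) + w))
           sums ((Digamma ((w + 1) / 2) - Digamma (w / 2)) / 2)"
proof -
  have Digamma_sums: "(\<lambda>k. inverse (of_nat (Suc k)) - inverse (y + of_nat k))
      sums (Digamma y + euler_mascheroni)" if "y \<noteq> 0" for y :: complex
    using summable_sums[OF summable_Digamma[OF that]] by (simp add: Digamma_def)
  have "w / 2 \<noteq> 0" "(w + 1) / 2 \<noteq> 0"
    using assms by (auto simp: add_eq_0_iff minus_equation_iff)
  then have grouped: "(\<lambda>k. ((inverse (of_nat (Suc k)) - inverse ((w + 1) / 2 + of_nat k))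
              - (inverse (of_nat (Suc k)) - inverse (w / 2 + of_nat k))) / 2)
        sums (((Digamma ((w + 1) / 2) + euler_mascheroni) - (Digamma (w / 2) + euler_mascheroni)) / 2)"
    by (intro sums_divide sums_diff Digamma_sums)
  have termwise: "((inverse (of_nat (Suc k)) - inverse ((w + 1) / 2 + of_nat k))
              - (inverse (of_nat (Suc k)) - inverse (w / 2 + of_nat k))) / 2
      = 1 / (of_nat (2 * k) + w) - 1 / (of_nat (2 * k + 1) + w)" for k
  proof -
    have inverse_half: "inverse (y / 2 + of_nat k) / 2 = 1 / (of_nat (2 * k) + y)" for y :: complex
    proof -
      have "of_nat (2 * k) + y = 2 * (y / 2 + of_nat k)"
        by simp
      then show ?thesis
        by (metis divide_divide_eq_left inverse_eq_divide mult.commute)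
    qed
    have "((inverse (of_nat (Suc k)) - inverse ((w + 1) / 2 + of_nat k))
              - (inverse (of_nat (Suc k)) - inverse (w / 2 + of_nat k))) / 2
        = inverse (w / 2 + of_nat k) / 2 - inverse ((w + 1) / 2 + of_nat k) / 2"
      by (simp add: diff_divide_distrib)
    also have "\<dots> = 1 / (of_nat (2 * k) + w) - 1 / (of_nat (2 * k) + (w + 1))"
      by (simp only: inverse_half)
    finally show ?thesis
      by (simp add: add_ac)
  qed
  show ?thesis
    using grouped unfolding termwise by simp
qed

lemma cot_add_cot_complement:
  fixes x :: "'a :: {real_normed_field, banach}"
  assumes "sin (2 * x) \<noteq> 0"
  shows "cot x + cot (of_real pi / 2 - x) = 2 / sin (2 * x)"
proof -
  have "sin x \<noteq> 0" "cos x \<noteq> 0"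
    using assms by (auto simp: sin_double)
  then show ?thesis
    by (simp add: cot_def sin_double flip: cos_sin_eq sin_cos_eq)
       (simp add: field_simps power2_eq_square flip: sin_cos_squared_add)
qed

lemma sums_alternating_of_pairs:
  fixes f :: "nat \<Rightarrow> 'a :: real_normed_field"
  assumes "f \<longlonglongrightarrow> 0" and "(\<lambda>k. f (2 * k) - f (2 * k + 1)) sums s"
  shows "(\<lambda>n. (-1) ^ n * f n) sums s"
proof -
  define S where "S m = (\<Sum>n<m. (-1) ^ n * f n)" for m
  have S_even: "S (2 * k) = (\<Sum>j<k. f (2 * j) - f (2 * j + 1))" for k
    by (induction k) (simp_all add: S_def)
  have "(\<lambda>k. S (2 * k)) \<longlonglongrightarrow> s"
    using assms(2) by (simp add: S_even sums_def)
  moreover have "(\<lambda>k. f (2 * k)) \<longlonglongrightarrow> 0"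
    using filterlim_compose[OF assms(1) mult_nat_left_at_top, of 2] by simp
  ultimately have "(\<lambda>k. S (2 * k + 1)) \<longlonglongrightarrow> s"
    using tendsto_add[of "\<lambda>k. S (2 * k)" s sequentially "\<lambda>k. f (2 * k)" 0] by (simp add: S_def)
  with \<open>(\<lambda>k. S (2 * k)) \<longlonglongrightarrow> s\<close> show ?thesis
    unfolding sums_def S_def[symmetric] by (rule limseq_even_odd)
qed

lemma pi_over_sin_alternating_sums:
  fixes u :: complex
  assumes "u \<notin> \<int>"
  shows "(\<lambda>n. (-1) ^ n * (1 / (of_nat n + u) + 1 / (of_nat n + (1 - u))))
           sums (of_real pi / sin (of_real pi * u))"
proof (rule sums_alternating_of_pairs)
  have "(\<lambda>n. 1 / (of_nat n + y)) \<longlonglongrightarrow> 0" for y :: complex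
    by (rule tendsto_divide_0[OF tendsto_const tendsto_add_filterlim_at_infinity'[OF tendsto_of_nat tendsto_const]])
  then show "(\<lambda>n. 1 / (of_nat n + u) + 1 / (of_nat n + (1 - u))) \<longlonglongrightarrow> 0"
    by (intro tendsto_add_zero)
  have half: "y / 2 \<notin> \<int>" if "y \<notin> \<int>" for y :: complex
    using that Ints_mult[of 2 "y / 2"] by auto
  have "1 - u \<notin> \<int>"
    using assms Ints_diff[of 1 "1 - u"] by auto
  then have "(\<lambda>k. (1 / (of_nat (2 * k) + u) - 1 / (of_nat (2 * k + 1) + u))
        + (1 / (of_nat (2 * k) + (1 - u)) - 1 / (of_nat (2 * k + 1) + (1 - u))))
      sums ((Digamma ((u + 1) / 2) - Digamma (u / 2)) / 2
        + (Digamma ((1 - u + 1) / 2) - Digamma ((1 - u) / 2)) / 2)"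
    using assms nonpos_Ints_subset_Ints by (intro sums_add Digamma_half_shift_sums) auto
  also have "(Digamma ((u + 1) / 2) - Digamma (u / 2)) / 2
        + (Digamma ((1 - u + 1) / 2) - Digamma ((1 - u) / 2)) / 2
      = of_real pi * (cot (of_real pi * (u / 2)) + cot (of_real pi / 2 - of_real pi * (u / 2))) / 2"
  proof -
    have "(u + 1) / 2 = 1 - (1 - u) / 2" "(1 - u + 1) / 2 = 1 - u / 2"
      "of_real pi / 2 - of_real pi * (u / 2) = of_real pi * ((1 - u) / 2)"
      by (simp_all add: field_simps)
    then show ?thesis
      using Digamma_reflection_complex[OF half[OF assms]]
        Digamma_reflection_complex[OF half[OF \<open>1 - u \<notin> \<int>\<close>]]
      by (simp add: field_simps)
  qed
  also have "\<dots> = of_real pi / sin (of_real pi * u)"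
  proof -
    have "sin (of_real pi * u) \<noteq> 0"
      using assms by (rule sin_pi_times_neq_0)
    then show ?thesis
      using cot_add_cot_complement[of "of_real pi * (u / 2)"] by simp
  qed
  finally show "(\<lambda>k. (1 / (of_nat (2 * k) + u) + 1 / (of_nat (2 * k) + (1 - u)))
          - (1 / (of_nat (2 * k + 1) + u) + 1 / (of_nat (2 * k + 1) + (1 - u))))
        sums (of_real pi / sin (of_real pi * u))"
    by (simp add: algebra_simps)
qed

lemma prod_list_divide:
  fixes f g :: "'b \<Rightarrow> 'a :: field"
  shows "(\<Prod>t\<leftarrow>ts. f t) / (\<Prod>t\<leftarrow>ts. g t) = (\<Prod>t\<leftarrow>ts. f t / g t)"
proof (induction ts)
  case Nil
  then show ?case by simp
next
  case (Cons t ts)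
  have "f t * (\<Prod>t\<leftarrow>ts. f t) / (g t * (\<Prod>t\<leftarrow>ts. g t)) = f t / g t * ((\<Prod>t\<leftarrow>ts. f t) / (\<Prod>t\<leftarrow>ts. g t))"
    by (rule times_divide_times_eq[symmetric])
  with Cons.IH show ?case
    by simp
qed

lemma pochhammer_divide_pochhammer_plus_one:
  fixes t :: "'a :: field_char_0"
  assumes "t \<notin> \<int>\<^sub>\<le>\<^sub>0"
  shows "pochhammer t n / pochhammer (1 + t) n = t / (t + of_nat n)"
proof -
  have "t + of_nat n \<noteq> 0"
    using assms plus_of_nat_eq_0_imp by blast
  moreover have "pochhammer (1 + t) n \<noteq> 0"
  proof
    assume "pochhammer (1 + t) n = 0"
    then obtain k where "1 + t = - of_nat k"
      by (auto simp: pochhammer_eq_0_iff)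
    then have "t + of_nat (Suc k) = 0"
      by (simp add: add.assoc[symmetric] add.commute[of t])
    with assms plus_of_nat_eq_0_imp show False
      by blast
  qed
  moreover have "pochhammer t n * (t + of_nat n) = t * pochhammer (1 + t) n"
    using pochhammer_rec[of t n] pochhammer_rec'[of t n] by (simp add: add.commute mult.commute)
  ultimately show ?thesis
    by (simp add: divide_eq_eq eq_divide_eq mult.commute)
qed

lemma hypergeom_term_well_poised:
  fixes ts :: "complex list"
  assumes "\<forall>t\<in>set ts. t \<notin> \<int>\<^sub>\<le>\<^sub>0"
  shows "(\<Prod>\<alpha>\<leftarrow>1 # 3/2 # ts. pochhammer \<alpha> n)
           / (\<Prod>\<beta>\<leftarrow>1/2 # map ((+) 1) ts. pochhammer \<beta> n) * z ^ n / fact n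
         = z ^ n * (2 * of_nat n + 1) * (\<Prod>t\<leftarrow>ts. t / (t + of_nat n))"
proof -
  have "(\<Prod>\<alpha>\<leftarrow>1 # 3/2 # ts. pochhammer \<alpha> n)
           / (\<Prod>\<beta>\<leftarrow>1/2 # map ((+) 1) ts. pochhammer \<beta> n) * z ^ n / fact n
      = z ^ n * (pochhammer 1 n / fact n) * (pochhammer (3/2) n / pochhammer (1/2) n)
          * ((\<Prod>t\<leftarrow>ts. pochhammer t n) / (\<Prod>t\<leftarrow>ts. pochhammer (1 + t) n))"
    by (simp add: o_def mult_ac)
  also have "pochhammer 1 n / fact n = (1 :: complex)"
    by (simp flip: pochhammer_fact)
  also have "pochhammer (3/2) n / pochhammer (1/2) n = (2 * of_nat n + 1 :: complex)"
  proof -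
    have "(1/2 :: complex) \<notin> \<int>\<^sub>\<le>\<^sub>0"
      using fraction_not_in_Ints[of 2 1] by (intro not_in_Ints_imp_not_in_nonpos_Ints) simp_all
    from pochhammer_divide_pochhammer_plus_one[OF this, of n]
    have "pochhammer (1/2) n / pochhammer (3/2) n = (1/2) / (1/2 + of_nat n :: complex)"
      by simp
    then have "pochhammer (3/2) n / pochhammer (1/2) n = (1/2 + of_nat n) / (1/2 :: complex)"
      by (metis inverse_divide)
    then show ?thesis
      by simp
  qed
  also have "(\<Prod>t\<leftarrow>ts. pochhammer t n) / (\<Prod>t\<leftarrow>ts. pochhammer (1 + t) n) = (\<Prod>t\<leftarrow>ts. t / (t + of_nat n))"
    using assms by (simp add: prod_list_divide pochhammer_divide_pochhammer_plus_one cong: map_cong)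
  finally show ?thesis
    by simp
qed

lemma well_poised_partial_fractions:
  fixes u v x :: "'a :: field"
  assumes "x + u \<noteq> 0" "x + v \<noteq> 0" "x + (1 - u) \<noteq> 0" "x + (1 - v) \<noteq> 0"
    and "u * (1 - u) \<noteq> v * (1 - v)"
  shows "(2 * x + 1) * (\<Prod>t\<leftarrow>[u, v, 1 - u, 1 - v]. t / (t + x))
       = u * (1 - u) * v * (1 - v) / (v * (1 - v) - u * (1 - u))
         * ((1 / (x + u) + 1 / (x + (1 - u))) - (1 / (x + v) + 1 / (x + (1 - v))))"
proof -
  define p where "p = (x + u) * (x + (1 - u))"
  define q where "q = (x + v) * (x + (1 - v))"
  have "p \<noteq> 0" "q \<noteq> 0"
    using assms by (simp_all add: p_def q_def)
  have q_minus_p: "q - p = v * (1 - v) - u * (1 - u)"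
    by (simp add: p_def q_def algebra_simps)
  with assms have "q - p \<noteq> 0"
    by simp
  have "1 / (x + w) + 1 / (x + (1 - w)) = (2 * x + 1) / ((x + w) * (x + (1 - w)))"
    if "x + w \<noteq> 0" "x + (1 - w) \<noteq> 0" for w
    using that by (simp add: field_simps)
  then have "(1 / (x + u) + 1 / (x + (1 - u))) - (1 / (x + v) + 1 / (x + (1 - v)))
      = (2 * x + 1) * (q - p) / (p * q)"
    using assms \<open>p \<noteq> 0\<close> \<open>q \<noteq> 0\<close> by (simp add: p_def q_def field_simps)
  moreover have "(\<Prod>t\<leftarrow>[u, v, 1 - u, 1 - v]. t / (t + x)) = u * (1 - u) * v * (1 - v) / (p * q)"
    by (simp add: p_def q_def add.commute[of x] mult_ac)
  ultimately show ?thesis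
    using \<open>q - p \<noteq> 0\<close> by (simp add: q_minus_p)
qed

lemma hypergeomF_well_poised_6F5_minus_one:
  fixes u v :: complex
  assumes "u \<notin> \<int>" "v \<notin> \<int>" "u * (1 - u) \<noteq> v * (1 - v)"
  shows "hypergeomF [1, 3/2, u, v, 1 - u, 1 - v] [1/2, 1 + u, 1 + v, 1 + (1 - u), 1 + (1 - v)] (-1)
       = u * (1 - u) * v * (1 - v) / (v * (1 - v) - u * (1 - u))
         * (of_real pi / sin (of_real pi * u) - of_real pi / sin (of_real pi * v))"
proof -
  define K where "K = u * (1 - u) * v * (1 - v) / (v * (1 - v) - u * (1 - u))"
  have reflected: "1 - u \<notin> \<int>" "1 - v \<notin> \<int>"
    using assms Ints_diff[of 1 "1 - u"] Ints_diff[of 1 "1 - v"] by auto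
  have shift: "of_nat n + t \<noteq> 0" if "t \<notin> \<int>" for t :: complex and n
    using that plus_of_nat_eq_0_imp[of t n] nonpos_Ints_subset_Ints by (auto simp: add.commute)
  have nonpos: "\<forall>t\<in>set [u, v, 1 - u, 1 - v]. t \<notin> \<int>\<^sub>\<le>\<^sub>0"
    using assms reflected nonpos_Ints_subset_Ints by auto
  have "(2 * of_nat n + 1) * (\<Prod>t\<leftarrow>[u, v, 1 - u, 1 - v]. t / (t + of_nat n))
      = K * ((1 / (of_nat n + u) + 1 / (of_nat n + (1 - u))) - (1 / (of_nat n + v) + 1 / (of_nat n + (1 - v))))"
    for n
    unfolding K_def using assms reflected by (intro well_poised_partial_fractions shift) auto
  moreover have "(\<Prod>\<alpha>\<leftarrow>[1, 3/2, u, v, 1 - u, 1 - v]. pochhammer \<alpha> n)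
          / (\<Prod>\<beta>\<leftarrow>[1/2, 1 + u, 1 + v, 1 + (1 - u), 1 + (1 - v)]. pochhammer \<beta> n) * (-1) ^ n / fact n
        = (-1) ^ n * ((2 * of_nat n + 1) * (\<Prod>t\<leftarrow>[u, v, 1 - u, 1 - v]. t / (t + of_nat n)))" for n
    using hypergeom_term_well_poised[OF nonpos, of n "-1"] by simp
  ultimately have "(\<Prod>\<alpha>\<leftarrow>[1, 3/2, u, v, 1 - u, 1 - v]. pochhammer \<alpha> n)
          / (\<Prod>\<beta>\<leftarrow>[1/2, 1 + u, 1 + v, 1 + (1 - u), 1 + (1 - v)]. pochhammer \<beta> n) * (-1) ^ n / fact n
        = K * ((-1) ^ n * (1 / (of_nat n + u) + 1 / (of_nat n + (1 - u)))
               - (-1) ^ n * (1 / (of_nat n + v) + 1 / (of_nat n + (1 - v))))" for n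
    by (simp only: right_diff_distrib mult.left_commute)
  moreover have "(\<lambda>n. K * ((-1) ^ n * (1 / (of_nat n + u) + 1 / (of_nat n + (1 - u)))
               - (-1) ^ n * (1 / (of_nat n + v) + 1 / (of_nat n + (1 - v)))))
      sums (K * (of_real pi / sin (of_real pi * u) - of_real pi / sin (of_real pi * v)))"
    using assms by (intro sums_mult sums_diff pi_over_sin_alternating_sums)
  ultimately show ?thesis
    unfolding hypergeomF_def K_def[symmetric] by (simp add: sums_iff)
qed

lemma inverse_cos_add_minus_inverse_cos_diff:
  fixes x y :: "'a :: {real_normed_field, banach}"
  assumes "cos (x + y) \<noteq> 0" "cos (x - y) \<noteq> 0"
  shows "1 / cos (x + y) - 1 / cos (x - y) = 4 * (sin x * sin y / (cos (2 * y) + cos (2 * x)))"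
proof -
  have "(x + y) - (x - y) = 2 * y" "(x + y) + (x - y) = 2 * x"
    by (simp_all add: algebra_simps)
  then have "cos (2 * y) + cos (2 * x) = 2 * (cos (x + y) * cos (x - y))"
    using cos_times_cos[of "x + y" "x - y"] by (simp add: mult.commute)
  moreover have "cos (x - y) - cos (x + y) = 2 * sin x * sin y"
    by (simp add: cos_add cos_diff)
  moreover have "1 / cos (x + y) - 1 / cos (x - y) = (cos (x - y) - cos (x + y)) / (cos (x + y) * cos (x - y))"
    using assms by (simp add: diff_frac_eq)
  ultimately show ?thesis
    by (simp add: mult.assoc)
qed

lemma half_minus_half_notin_Ints:
  fixes x :: "'a :: field_char_0"
  assumes "\<forall>k::int. x \<noteq> of_int (2 * k + 1)"
  shows "1/2 - x/2 \<notin> \<int>"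
proof
  assume "1/2 - x/2 \<in> \<int>"
  then obtain m where "1/2 - x/2 = of_int m"
    by (elim Ints_cases)
  then have "x = 1 - 2 * of_int m"
    by (simp add: field_simps)
  then have "x = of_int (2 * (- m) + 1)"
    by simp
  with assms show False
    by blast
qed

lemma well_poised_coefficient:
  fixes a b c :: complex
  assumes "a \<noteq> 0" "b \<noteq> 0" "c \<noteq> 0"
  defines "u \<equiv> 1/2 - (a + c) / (2 * b)" and "v \<equiv> 1/2 - (a - c) / (2 * b)"
  shows "v * (1 - v) - u * (1 - u) = a * c / b^2"
    and "u * (1 - u) * v * (1 - v) / (v * (1 - v) - u * (1 - u))
         = (b - a - c) * (b + a + c) * (b - a + c) * (b + a - c) / (16 * a * c * b^2)"
proof -
  show difference: "v * (1 - v) - u * (1 - u) = a * c / b^2"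
    using assms(2) unfolding u_def v_def by (simp add: field_simps power2_eq_square)
  have product: "u * (1 - u) * v * (1 - v) = (b - a - c) * (b + a + c) * (b - a + c) * (b + a - c) / (16 * b^4)"
    using assms(2) unfolding u_def v_def by (simp add: field_simps) (simp add: algebra_simps power4_eq_xxxx)
  show "u * (1 - u) * v * (1 - v) / (v * (1 - v) - u * (1 - u))
        = (b - a - c) * (b + a + c) * (b - a + c) * (b + a - c) / (16 * a * c * b^2)"
    unfolding difference product using assms(1-3) by (simp add: field_simps power2_eq_square power4_eq_xxxx)
qed

lemma pi_over_sin_difference_half_angles:
  fixes a b c :: complex
  assumes "b \<noteq> 0" and "1/2 - (a + c) / (2 * b) \<notin> \<int>" and "1/2 - (a - c) / (2 * b) \<notin> \<int>"
  shows "of_real pi / sin (of_real pi * (1/2 - (a + c) / (2 * b)))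
           - of_real pi / sin (of_real pi * (1/2 - (a - c) / (2 * b)))
         = of_real pi * (4 * (sin (a * of_real pi / (2 * b)) * sin (c * of_real pi / (2 * b))
             / (cos (c * of_real pi / b) + cos (a * of_real pi / b))))"
proof -
  define \<alpha> where "\<alpha> = a * of_real pi / (2 * b)"
  define \<gamma> where "\<gamma> = c * of_real pi / (2 * b)"
  have "of_real pi / 2 - of_real pi * (1/2 - (a + c) / (2 * b)) = \<alpha> + \<gamma>"
       "of_real pi / 2 - of_real pi * (1/2 - (a - c) / (2 * b)) = \<alpha> - \<gamma>"
    using assms(1) unfolding \<alpha>_def \<gamma>_def by (simp_all add: field_simps)
  then have sin_cos: "sin (of_real pi * (1/2 - (a + c) / (2 * b))) = cos (\<alpha> + \<gamma>)"
      "sin (of_real pi * (1/2 - (a - c) / (2 * b))) = cos (\<alpha> - \<gamma>)"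
    by (metis sin_cos_eq)+
  have cos_nonzero: "cos (\<alpha> + \<gamma>) \<noteq> 0" "cos (\<alpha> - \<gamma>) \<noteq> 0"
    using sin_pi_times_neq_0[OF assms(2)] sin_pi_times_neq_0[OF assms(3)] unfolding sin_cos .
  have double: "c * of_real pi / b = 2 * \<gamma>" "a * of_real pi / b = 2 * \<alpha>"
    using assms(1) by (simp_all add: \<alpha>_def \<gamma>_def)
  have "of_real pi / cos (\<alpha> + \<gamma>) - of_real pi / cos (\<alpha> - \<gamma>)
      = of_real pi * (1 / cos (\<alpha> + \<gamma>) - 1 / cos (\<alpha> - \<gamma>))"
    by (simp add: right_diff_distrib)
  also have "\<dots> = of_real pi * (4 * (sin \<alpha> * sin \<gamma> / (cos (2 * \<gamma>) + cos (2 * \<alpha>))))"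
    by (simp only: inverse_cos_add_minus_inverse_cos_diff[OF cos_nonzero])
  finally show ?thesis
    unfolding sin_cos double \<alpha>_def[symmetric] \<gamma>_def[symmetric] .
qed

theorem mainTheorem3:
  fixes a b c :: complex
  assumes "a \<noteq> 0" and "c \<noteq> 0"
    and "Re b > 0" and "Re (b + a + c) > 0" and "Re (b + a - c) > 0"
    and "Re (b - a + c) > 0" and "Re (b - a - c) > 0"
    and "\<forall>k::int. (a + c) / b \<noteq> of_int (2 * k + 1)"
    and "\<forall>k::int. (a - c) / b \<noteq> of_int (2 * k + 1)"
    and "\<forall>m::nat. 1 + (1/2 - (a + c) / (2 * b)) \<noteq> - of_nat m"
    and "\<forall>m::nat. 1 + (1/2 - (a - c) / (2 * b)) \<noteq> - of_nat m"
    and "\<forall>m::nat. 1 + (1/2 + (a + c) / (2 * b)) \<noteq> - of_nat m"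
    and "\<forall>m::nat. 1 + (1/2 + (a - c) / (2 * b)) \<noteq> - of_nat m"
  shows "let \<tau>1 = 1/2 - (a + c) / (2 * b); \<tau>2 = 1/2 - (a - c) / (2 * b);
             \<tau>3 = 1/2 + (a + c) / (2 * b); \<tau>4 = 1/2 + (a - c) / (2 * b);
             Q = (b - a - c) * (b + a + c) * (b - a + c) * (b + a - c)
         in hypergeomF [1, 3/2, \<tau>1, \<tau>2, \<tau>3, \<tau>4] [1/2, 1 + \<tau>1, 1 + \<tau>2, 1 + \<tau>3, 1 + \<tau>4] (-1)
            = of_real pi * Q / (4 * a * c * b^2) *
              (sin (a * of_real pi / (2 * b)) * sin (c * of_real pi / (2 * b))
               / (cos (c * of_real pi / b) + cos (a * of_real pi / b)))"
proof -
  \<comment> \<open>Only the conditions that (a \<plusminus> c) / b is not an odd integer (they give tau_j \<notin> \<int>)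
    and Re b > 0 (for b \<noteq> 0) are needed.\<close>
  have "b \<noteq> 0"
    using assms(3) by auto
  define Q where "Q = (b - a - c) * (b + a + c) * (b - a + c) * (b + a - c)"
  define u where "u = 1/2 - (a + c) / (2 * b)"
  define v where "v = 1/2 - (a - c) / (2 * b)"
  have "u \<notin> \<int>" "v \<notin> \<int>"
    using half_minus_half_notin_Ints[OF assms(8)] half_minus_half_notin_Ints[OF assms(9)]
    by (simp_all add: u_def v_def mult.commute)
  moreover have "u * (1 - u) \<noteq> v * (1 - v)"
    using well_poised_coefficient(1)[OF assms(1) \<open>b \<noteq> 0\<close> assms(2)] \<open>b \<noteq> 0\<close> assms(1,2)
    by (auto simp: u_def v_def)
  ultimately have "hypergeomF [1, 3/2, u, v, 1 - u, 1 - v] [1/2, 1 + u, 1 + v, 1 + (1 - u), 1 + (1 - v)] (-1)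
      = u * (1 - u) * v * (1 - v) / (v * (1 - v) - u * (1 - u))
         * (of_real pi / sin (of_real pi * u) - of_real pi / sin (of_real pi * v))"
    by (rule hypergeomF_well_poised_6F5_minus_one)
  also have "\<dots> = Q / (16 * a * c * b^2) * (of_real pi * (4 * (sin (a * of_real pi / (2 * b))
      * sin (c * of_real pi / (2 * b)) / (cos (c * of_real pi / b) + cos (a * of_real pi / b)))))"
    using \<open>u \<notin> \<int>\<close> \<open>v \<notin> \<int>\<close> unfolding u_def v_def
    using well_poised_coefficient(2)[OF assms(1) \<open>b \<noteq> 0\<close> assms(2), folded Q_def]
      pi_over_sin_difference_half_angles[OF \<open>b \<noteq> 0\<close>] by simp
  also have "Q / (16 * a * c * b^2) * (of_real pi * (4 * X)) = of_real pi * Q / (4 * a * c * b^2) * X" for X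
    using \<open>b \<noteq> 0\<close> assms(1,2) by (simp add: field_simps)
  finally show ?thesis
    unfolding Let_def u_def v_def Q_def[symmetric] by (simp add: diff_diff_eq2)
qed

end
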